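(* Let $\mathsf{M}_{\rho_0}[\boldsymbol{\beta},\boldsymbol{\alpha}]\triangleq\mathbb{E}_{\rho_0(\mathbf{x})}[\boldsymbol{\beta}(\mathbf{x})\boldsymbol{\alpha}(\mathbf{x})^\intercal]$. Let $\mathbf{z}\in\mathbb{C}^r$ be a left eigenvector of $\mathsf{M}_{\rho_0}[\boldsymbol{\beta},\boldsymbol{\alpha}]$ with eigenvalue $\lambda\in\mathbb{C}$, i.e., $\mathbf{z}^*\mathsf{M}_{\rho_0}[\boldsymbol{\beta},\boldsymbol{\alpha}]=\lambda\mathbf{z}^*$. If we define $\zeta(\mathbf{x}')\triangleq\mathbf{z}^\intercal\boldsymbol{\beta}(\mathbf{x}')$, then $\zeta$ is a left eigenfunction of $\mathcal{K}$ with eigenvalue $\lambda$, i.e., $\mathcal{K}^*\zeta=\overline{\lambda}\zeta$.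
   Context: Let $\mathcal{X}\subseteq\mathbb{R}^d$, let $p(\mathbf{x}'|\mathbf{x})$ be the transition density of a time-homogeneous Markov process, and let $\rho_0,\rho_1$ be the distributions of the current and future states. The Koopman operator $\mathcal{K}\colon L^2_{\rho_1}(\mathcal{X})\to L^2_{\rho_0}(\mathcal{X})$ is $(\mathcal{K}g)(\mathbf{x})=\int k(\mathbf{x},\mathbf{x}')g(\mathbf{x}')\rho_1(\mathbf{x}')d\mathbf{x}'$ with kernel $k(\mathbf{x},\mathbf{x}')\triangleq p(\mathbf{x}'|\mathbf{x})/\rho_1(\mathbf{x}')$, and its adjoint is $(\mathcal{K}^*f)(\mathbf{x}')=\int k(\mathbf{x},\mathbf{x}')f(\mathbf{x})\rho_0(\mathbf{x})d\mathbf{x}$. Assume the operator has finite rank with factorized kernel $k(\mathbf{x},\mathbf{x}')=\boldsymbol{\alpha}(\mathbf{x})^\intercal\boldsymbol{\beta}(\mathbf{x}')=\sum_{i=1}^r\alpha_i(\mathbf{x})\beta_i(\mathbf{x}')$. *)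

theory Defs
  imports "HOL-Analysis.Analysis"
begin

text \<open>States live in X \<subseteq> R^d (d encoded by the finite type 'd); integrals are w.r.t.
  Lebesgue measure restricted to X. p x x' is the transition density p(x'|x).\<close>

definition koopman_kernel ::
  "(real^'d \<Rightarrow> real^'d \<Rightarrow> real) \<Rightarrow> (real^'d \<Rightarrow> real) \<Rightarrow> real^'d \<Rightarrow> real^'d \<Rightarrow> real" where
  "koopman_kernel p \<rho>1 x x' = p x x' / \<rho>1 x'"

definition koopman ::
  "(real^'d \<Rightarrow> real^'d \<Rightarrow> real) \<Rightarrow> (real^'d \<Rightarrow> real) \<Rightarrow> (real^'d) set
     \<Rightarrow> (real^'d \<Rightarrow> complex) \<Rightarrow> real^'d \<Rightarrow> complex" where
  "koopman k \<rho>1 X g x = (\<integral>x'\<in>X. complex_of_real (k x x' * \<rho>1 x') * g x' \<partial>lborel)"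

definition koopman_adj ::
  "(real^'d \<Rightarrow> real^'d \<Rightarrow> real) \<Rightarrow> (real^'d \<Rightarrow> real) \<Rightarrow> (real^'d) set
     \<Rightarrow> (real^'d \<Rightarrow> complex) \<Rightarrow> real^'d \<Rightarrow> complex" where
  "koopman_adj k \<rho>0 X f x' = (\<integral>x\<in>X. complex_of_real (k x x' * \<rho>0 x) * f x \<partial>lborel)"

definition expect_dens :: "(real^'d \<Rightarrow> real) \<Rightarrow> (real^'d) set \<Rightarrow> (real^'d \<Rightarrow> real) \<Rightarrow> real" where
  "expect_dens \<rho> X f = (\<integral>x\<in>X. \<rho> x * f x \<partial>lborel)"

definition M_mat :: "(real^'d \<Rightarrow> real) \<Rightarrow> (real^'d) set \<Rightarrow> (real^'d \<Rightarrow> real^'r)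
     \<Rightarrow> (real^'d \<Rightarrow> real^'r) \<Rightarrow> complex^'r^'r" where
  "M_mat \<rho> X \<beta> \<alpha> = (\<chi> i j. complex_of_real (expect_dens \<rho> X (\<lambda>x. \<beta> x $ i * \<alpha> x $ j)))"

end

theory Submission
  imports Defs
begin

text \<open>For a finite-rank kernel k(x,x') = alpha(x)^T beta(x'), linearity of the integral
  shows that the adjoint maps z^T beta to (z^T M) beta with M = M_rho0[beta, alpha]. Since M
  is real, conjugating z^* M = lambda z^* gives z^T M = conj(lambda) z^T.\<close>

lemma set_integrable_sum:
  fixes f :: "'i \<Rightarrow> 'a \<Rightarrow> 'b::{banach, second_countable_topology}"
  assumes "\<And>i. i \<in> I \<Longrightarrow> set_integrable M A (f i)"
  shows "set_integrable M A (\<lambda>x. \<Sum>i\<in>I. f i x)"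
  using assms unfolding set_integrable_def by (simp add: scaleR_sum_right)

lemma set_integral_sum:
  fixes f :: "'i \<Rightarrow> 'a \<Rightarrow> 'b::{banach, second_countable_topology}"
  assumes "\<And>i. i \<in> I \<Longrightarrow> set_integrable M A (f i)"
  shows "(LINT x:A|M. \<Sum>i\<in>I. f i x) = (\<Sum>i\<in>I. LINT x:A|M. f i x)"
  using assms unfolding set_integrable_def set_lebesgue_integral_def
  by (simp add: scaleR_sum_right integral_sum)

lemma set_integrable_complex_of_real_iff:
  "set_integrable M A (\<lambda>x. complex_of_real (f x)) \<longleftrightarrow> set_integrable M A f"
proof -
  have "(\<lambda>x. indicator A x *\<^sub>R complex_of_real (f x)) = (\<lambda>x. complex_of_real (indicator A x *\<^sub>R f x))"
    by (auto split: split_indicator)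
  then show ?thesis
    unfolding set_integrable_def by (simp only: complex_of_real_integrable_eq)
qed

lemma cnj_M_mat: "cnj (M_mat \<rho> X \<beta> \<alpha> $ i $ j) = M_mat \<rho> X \<beta> \<alpha> $ i $ j"
  by (simp add: M_mat_def)

lemma left_eigenvector_of_real_matrix:
  fixes M :: "complex^'n^'n" and z :: "complex^'n"
  assumes real: "\<And>i j. cnj (M $ i $ j) = M $ i $ j"
    and left_eig: "(\<chi> i. cnj (z $ i)) v* M = lam *s (\<chi> i. cnj (z $ i))"
  shows "z v* M = cnj lam *s z"
proof -
  have "(z v* M) $ j = cnj (((\<chi> i. cnj (z $ i)) v* M) $ j)" for j
    by (simp add: vector_matrix_mult_def real)
  then show ?thesis
    by (simp add: left_eig vec_eq_iff)
qed

lemma koopman_adj_finite_rank: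
  fixes X :: "(real^'d) set" and \<alpha> \<beta> :: "real^'d \<Rightarrow> real^'r" and z :: "complex^'r"
  assumes X_meas: "X \<in> sets lborel"
    and factorized: "\<And>x x'. x \<in> X \<Longrightarrow> x' \<in> X \<Longrightarrow> k x x' = (\<Sum>i\<in>UNIV. \<alpha> x $ i * \<beta> x' $ i)"
    and integrable: "\<And>i j. set_integrable lborel X (\<lambda>x. \<rho>0 x * (\<beta> x $ i * \<alpha> x $ j))"
    and x': "x' \<in> X"
  shows "koopman_adj k \<rho>0 X (\<lambda>x. \<Sum>j\<in>UNIV. z $ j * complex_of_real (\<beta> x $ j)) x'
    = (\<Sum>i\<in>UNIV. (z v* M_mat \<rho>0 X \<beta> \<alpha>) $ i * complex_of_real (\<beta> x' $ i))"
proof -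
  let ?g = "\<lambda>j i x. complex_of_real (\<rho>0 x * (\<beta> x $ j * \<alpha> x $ i))"
  have g_integrable: "set_integrable lborel X (\<lambda>x. c * ?g j i x)" for c j i
    by (intro set_integrable_mult_right) (simp only: set_integrable_complex_of_real_iff integrable)
  have integrand: "complex_of_real (k x x' * \<rho>0 x) * (\<Sum>j\<in>UNIV. z $ j * complex_of_real (\<beta> x $ j))
      = (\<Sum>i\<in>UNIV. \<Sum>j\<in>UNIV. (complex_of_real (\<beta> x' $ i) * z $ j) * ?g j i x)" if "x \<in> X" for x
    using that x'
    by (simp add: factorized sum_distrib_left sum_distrib_right mult_ac)
  have "koopman_adj k \<rho>0 X (\<lambda>x. \<Sum>j\<in>UNIV. z $ j * complex_of_real (\<beta> x $ j)) x'
      = (LINT x:X|lborel. \<Sum>i\<in>UNIV. \<Sum>j\<in>UNIV. (complex_of_real (\<beta> x' $ i) * z $ j) * ?g j i x)"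
    unfolding koopman_adj_def using integrand by (intro set_lebesgue_integral_cong X_meas) simp
  also have "\<dots> = (\<Sum>i\<in>UNIV. \<Sum>j\<in>UNIV. (complex_of_real (\<beta> x' $ i) * z $ j) * M_mat \<rho>0 X \<beta> \<alpha> $ j $ i)"
    by (simp add: set_integral_sum set_integrable_sum g_integrable set_integral_complex_of_real
        M_mat_def expect_dens_def del: of_real_mult)
  also have "\<dots> = (\<Sum>i\<in>UNIV. (z v* M_mat \<rho>0 X \<beta> \<alpha>) $ i * complex_of_real (\<beta> x' $ i))"
    by (simp add: vector_matrix_mult_def sum_distrib_left sum_distrib_right mult_ac)
  finally show ?thesis .
qed

theorem theoremC3:
  fixes X :: "(real^'d) set"
    and p :: "real^'d \<Rightarrow> real^'d \<Rightarrow> real"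
    and \<rho>0 \<rho>1 :: "real^'d \<Rightarrow> real"
    and \<alpha> \<beta> :: "real^'d \<Rightarrow> real^'r"
    and z :: "complex^'r" and lam :: complex
    and \<zeta> :: "real^'d \<Rightarrow> complex"
  assumes X_meas: "X \<in> sets lborel"
    and p_nonneg: "\<And>x x'. p x x' \<ge> 0"
    and rho0_nonneg: "\<And>x. \<rho>0 x \<ge> 0"
    and rho1_nonneg: "\<And>x. \<rho>1 x \<ge> 0"
    and factorized: "\<And>x x'. x \<in> X \<Longrightarrow> x' \<in> X \<Longrightarrow>
         koopman_kernel p \<rho>1 x x' = (\<Sum>i\<in>UNIV. \<alpha> x $ i * \<beta> x' $ i)"
    and integrable: "\<And>i j. set_integrable lborel X (\<lambda>x. \<rho>0 x * (\<beta> x $ i * \<alpha> x $ j))"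
    and z_nonzero: "z \<noteq> 0"
    and left_eig: "(\<chi> i. cnj (z $ i)) v* M_mat \<rho>0 X \<beta> \<alpha> = lam *s (\<chi> i. cnj (z $ i))"
    and zeta_def: "\<And>x'. \<zeta> x' = (\<Sum>i\<in>UNIV. z $ i * complex_of_real (\<beta> x' $ i))"
  shows "\<forall>x'\<in>X. koopman_adj (koopman_kernel p \<rho>1) \<rho>0 X \<zeta> x' = cnj lam * \<zeta> x'"
proof
  fix x' assume x': "x' \<in> X"
  have \<zeta>_eq: "\<zeta> = (\<lambda>x. \<Sum>j\<in>UNIV. z $ j * complex_of_real (\<beta> x $ j))"
    using zeta_def by blast
  have "z v* M_mat \<rho>0 X \<beta> \<alpha> = cnj lam *s z"
    using left_eig by (rule left_eigenvector_of_real_matrix[OF cnj_M_mat])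
  with koopman_adj_finite_rank[OF X_meas factorized integrable x']
  show "koopman_adj (koopman_kernel p \<rho>1) \<rho>0 X \<zeta> x' = cnj lam * \<zeta> x'"
    by (simp add: \<zeta>_eq sum_distrib_left mult.assoc)
qed

end
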